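(* There is a polynomial-time algorithm that, given a weighted voting game $[q;w_1,\dots,w_n]$, outputs a coalition structure whose social welfare is at least half of the maximum social welfare of any coalition structure of that game.
   Context: A WVG $[q;w_1,\dots,w_n]$ with $q,w_i\in\mathbb R^+$ is the game on $N=\{1,\dots,n\}$ with $v(C)=1$ iff $\sum_{i\in C}w_i\ge q$, else $0$. A coalition structure is a partition $\pi$ of $N$ with social welfare $v(\pi)=\sum_{C\in\pi}v(C)$. *)

theory Defs
  imports Main Complex_Main "HOL-Library.Disjoint_Sets"
begin

definition wvg_value :: "real \<Rightarrow> (nat \<Rightarrow> real) \<Rightarrow> nat set \<Rightarrow> nat" where
  "wvg_value q w C = (if (\<Sum>i\<in>C. w i) \<ge> q then 1 else 0)"

definition coalition_structure :: "nat \<Rightarrow> nat set set \<Rightarrow> bool" where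
  "coalition_structure n \<pi> \<longleftrightarrow> partition_on {1..n} \<pi>"

definition social_welfare :: "real \<Rightarrow> (nat \<Rightarrow> real) \<Rightarrow> nat set set \<Rightarrow> nat" where
  "social_welfare q w \<pi> = (\<Sum>C\<in>\<pi>. wvg_value q w C)"

type_synonym state = "(nat \<Rightarrow> nat) \<times> (nat \<Rightarrow> real)"

datatype nexp = NC nat | NM nexp | NPlus nexp nexp | NMinus nexp nexp
datatype rexp = RofN nexp | RM nexp | RPlus rexp rexp | RMinus rexp rexp | RTimes rexp rexp
datatype bexp = NLess nexp nexp | RLess rexp rexp | RLeq rexp rexp | BNot bexp | BAnd bexp bexp
datatype com = Skip | NAsg nexp nexp | RAsg nexp rexp | Seq com com
  | If bexp com com | While bexp com

fun neval :: "state \<Rightarrow> nexp \<Rightarrow> nat" where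
  "neval s (NC k) = k"
| "neval s (NM a) = fst s (neval s a)"
| "neval s (NPlus a b) = neval s a + neval s b"
| "neval s (NMinus a b) = neval s a - neval s b"

fun reval :: "state \<Rightarrow> rexp \<Rightarrow> real" where
  "reval s (RofN a) = real (neval s a)"
| "reval s (RM a) = snd s (neval s a)"
| "reval s (RPlus a b) = reval s a + reval s b"
| "reval s (RMinus a b) = reval s a - reval s b"
| "reval s (RTimes a b) = reval s a * reval s b"

fun beval :: "state \<Rightarrow> bexp \<Rightarrow> bool" where
  "beval s (NLess a b) = (neval s a < neval s b)"
| "beval s (RLess a b) = (reval s a < reval s b)"
| "beval s (RLeq a b) = (reval s a \<le> reval s b)"
| "beval s (BNot b) = (\<not> beval s b)"
| "beval s (BAnd a b) = (beval s a \<and> beval s b)"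

inductive exec :: "com \<Rightarrow> state \<Rightarrow> nat \<Rightarrow> state \<Rightarrow> bool" where
  Skip: "exec Skip s 1 s"
| NAsg: "exec (NAsg a e) s 1 ((fst s)(neval s a := neval s e), snd s)"
| RAsg: "exec (RAsg a e) s 1 (fst s, (snd s)(neval s a := reval s e))"
| Seq: "exec c1 s t1 s1 \<Longrightarrow> exec c2 s1 t2 s2 \<Longrightarrow> exec (Seq c1 c2) s (t1 + t2) s2"
| IfT: "beval s b \<Longrightarrow> exec c1 s t s' \<Longrightarrow> exec (If b c1 c2) s (t + 1) s'"
| IfF: "\<not> beval s b \<Longrightarrow> exec c2 s t s' \<Longrightarrow> exec (If b c1 c2) s (t + 1) s'"
| WhileF: "\<not> beval s b \<Longrightarrow> exec (While b c) s 1 s"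
| WhileT: "beval s b \<Longrightarrow> exec c s t1 s1 \<Longrightarrow> exec (While b c) s1 t2 s2
           \<Longrightarrow> exec (While b c) s (t1 + t2 + 1) s2"

text \<open>Input encoding of [q; w_1,...,w_n]: nat cell 0 holds n, real cell 0 holds q,
real cell i holds w_i for 1 \<le> i \<le> n; all other cells are 0.\<close>
definition init_state :: "nat \<Rightarrow> real \<Rightarrow> (nat \<Rightarrow> real) \<Rightarrow> state" where
  "init_state n q w = ((\<lambda>i. if i = 0 then n else 0),
                       (\<lambda>i. if i = 0 then q else if i \<le> n then w i else 0))"

text \<open>Output decoding: nat cell i (1 \<le> i \<le> n) holds a label of player i;
players with equal labels form one coalition.\<close>
definition output_cs :: "nat \<Rightarrow> state \<Rightarrow> nat set set" where
  "output_cs n s = (\<lambda>l. {i\<in>{1..n}. fst s i = l}) ` (fst s ` {1..n})"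

end

theory Submission imports Defs begin

(* The algorithm is the greedy "bag filling" heuristic: scan the
   players 1..n in order, putting each into the currently open bag; as soon as
   the open bag reaches the quota it is closed and a new bag is opened.
   Every closed bag is a winning coalition.  For the analysis, truncate each
   weight at q: a winning coalition C satisfies q <= sum_{j in C} min(w j, q),
   so every coalition structure has welfare at most W / q, where
   W = sum_{j=1..n} min(w j, q).  Each greedy step adds min(w i, q) <= q to W
   while either keeping the open bag below q or closing a bag, which gives the
   invariant W <= 2 q g + a (g closed bags, a < q the open bag's weight).
   Hence optimum <= 2 g <= 2 * (greedy welfare). *)

section \<open>An upper bound on the social welfare\<close>

lemma value_times_quota_le:
  assumes q: "q > 0" and wp: "\<forall>j\<in>C. w j > 0" and fin: "finite C"
  shows "real (wvg_value q w C) * q \<le> (\<Sum>j\<in>C. min (w j) q)"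
proof (cases "(\<Sum>j\<in>C. w j) \<ge> q")
  case winning: True
  show ?thesis
  proof (cases "\<exists>j\<in>C. w j \<ge> q")
    case True
    then obtain j where j: "j \<in> C" "w j \<ge> q" by blast
    have "q = min (w j) q" using j by simp
    also have "\<dots> \<le> (\<Sum>j\<in>C. min (w j) q)"
      using fin j wp q by (intro member_le_sum) auto
    finally show ?thesis using winning by (simp add: wvg_value_def)
  next
    case False
    then have "(\<Sum>j\<in>C. min (w j) q) = (\<Sum>j\<in>C. w j)" by (intro sum.cong) auto
    then show ?thesis using winning by (simp add: wvg_value_def)
  qed
next
  case False
  have "0 \<le> (\<Sum>j\<in>C. min (w j) q)" using wp q by (intro sum_nonneg) auto
  then show ?thesis using False by (simp add: wvg_value_def)
qed

lemma welfare_times_quota_le: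
  assumes q: "q > 0" and wp: "\<forall>j\<in>{1..n}. w j > 0" and cs: "coalition_structure n \<pi>"
  shows "real (social_welfare q w \<pi>) * q \<le> (\<Sum>j\<in>{1..n}. min (w j) q)"
proof -
  have P: "partition_on {1..n} \<pi>" using cs by (simp add: coalition_structure_def)
  have sub: "C \<subseteq> {1..n}" if "C \<in> \<pi>" for C using P that by (auto simp: partition_on_def)
  have fin_blocks: "\<forall>C\<in>\<pi>. finite C" using sub finite_subset by blast
  have disj: "\<forall>A\<in>\<pi>. \<forall>B\<in>\<pi>. A \<noteq> B \<longrightarrow> A \<inter> B = {}"
    using P unfolding partition_on_def disjoint_def by blast
  have "real (social_welfare q w \<pi>) * q = (\<Sum>C\<in>\<pi>. real (wvg_value q w C) * q)"
    by (simp add: social_welfare_def sum_distrib_right)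
  also have "\<dots> \<le> (\<Sum>C\<in>\<pi>. \<Sum>j\<in>C. min (w j) q)"
    using sub wp fin_blocks by (intro sum_mono value_times_quota_le[OF q]) auto
  also have "\<dots> = (\<Sum>j\<in>\<Union>\<pi>. min (w j) q)"
    using sum.Union_disjoint[OF fin_blocks disj, of "\<lambda>j. min (w j) q"] by (simp add: comp_def)
  also have "\<Union>\<pi> = {1..n}" using P by (simp add: partition_on_def)
  finally show ?thesis .
qed

section \<open>The greedy invariant\<close>

text \<open>State of the greedy scan after players 1..i-1 received labels L:
  all labels are at most g, the closed bags 0..g-1 are winning, the open bag g
  has weight a with 0 <= a < q, and the truncated weight seen so far is at
  most 2 q g + a.\<close>
definition greedy_inv ::
    "nat \<Rightarrow> real \<Rightarrow> (nat \<Rightarrow> real) \<Rightarrow> (nat \<Rightarrow> nat) \<Rightarrow> nat \<Rightarrow> nat \<Rightarrow> real \<Rightarrow> bool" where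
  "greedy_inv n q w L i g a \<longleftrightarrow> 1 \<le> i \<and> i \<le> n+1 \<and> (\<forall>j\<in>{1..<i}. L j \<le> g) \<and>
     (\<forall>l<g. q \<le> (\<Sum>j\<in>{j\<in>{1..<i}. L j = l}. w j)) \<and>
     (\<Sum>j\<in>{j\<in>{1..<i}. L j = g}. w j) = a \<and>
     0 \<le> a \<and> a < q \<and> (\<Sum>j\<in>{1..<i}. min (w j) q) \<le> 2*q*g + a"

lemma greedy_inv_cong:
  assumes "\<And>j. j \<in> {1..<i} \<Longrightarrow> L j = L' j"
  shows "greedy_inv n q w L i g a = greedy_inv n q w L' i g a"
proof -
  have "{j\<in>{1..<i}. L j = l} = {j\<in>{1..<i}. L' j = l}" for l using assms by auto
  then show ?thesis using assms unfolding greedy_inv_def by (metis (no_types, lifting))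
qed

lemma greedy_inv_step:
  assumes inv: "greedy_inv n q w L i g a" and i: "i \<le> n"
    and wp: "\<forall>j\<in>{1..n}. w j > 0" and q: "q > 0"
  shows "greedy_inv n q w (L(i := g)) (i+1)
           (if a + w i < q then g else g+1) (if a + w i < q then a + w i else 0)"
proof -
  have i1: "1 \<le> i" using inv by (simp add: greedy_inv_def)
  have wi: "w i > 0" using wp i i1 by auto
  have bag: "{j\<in>{1..<i+1}. (L(i:=g)) j = l} = {j\<in>{1..<i}. L j = l} \<union> (if l = g then {i} else {})"
    for l using i1 by auto
  have bag_weight: "(\<Sum>j\<in>{j\<in>{1..<i+1}. (L(i:=g)) j = l}. w j)
      = (\<Sum>j\<in>{j\<in>{1..<i}. L j = l}. w j) + (if l = g then w i else 0)" for l
    by (subst bag) (auto simp: sum.union_disjoint)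
  have total: "(\<Sum>j\<in>{1..<i+1}. min (w j) q) = (\<Sum>j\<in>{1..<i}. min (w j) q) + min (w i) q"
    using i1 by simp
  from inv have I: "\<forall>j\<in>{1..<i}. L j \<le> g" "\<forall>l<g. q \<le> (\<Sum>j\<in>{j\<in>{1..<i}. L j = l}. w j)"
    "(\<Sum>j\<in>{j\<in>{1..<i}. L j = g}. w j) = a" "0 \<le> a" "a < q"
    "(\<Sum>j\<in>{1..<i}. min (w j) q) \<le> 2*q*g + a"
    by (auto simp: greedy_inv_def)
  show ?thesis
  proof (cases "a + w i < q")
    case True
    then show ?thesis using I i i1 wi unfolding greedy_inv_def bag_weight total
      by (auto simp: min_def)
  next
    case False
    have "{j\<in>{1..<i}. L j = Suc g} = {}" using I(1) by fastforce
    then have no_new_bag: "(\<Sum>j\<in>{j\<in>{1..<i}. L j = Suc g}. w j) = 0" by (simp only: sum.empty)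
    have closed_winning: "\<forall>l<Suc g. q \<le> (\<Sum>j\<in>{j\<in>{1..<i}. L j = l}. w j) + (if l = g then w i else 0)"
      using I(2,3) False wi by (auto simp: less_Suc_eq)
    have labels: "\<forall>j\<in>{1..<i+1}. (L(i:=g)) j \<le> Suc g" using I(1) by (auto simp: le_Suc_eq less_Suc_eq)
    have "min (w i) q \<le> q" by simp
    then have "(\<Sum>j\<in>{1..<i}. min (w j) q) + min (w i) q < 2 * q * (1 + real g)"
      using I(5,6) by (simp add: algebra_simps)
    then show ?thesis using I i i1 False closed_winning labels q no_new_bag
      unfolding greedy_inv_def bag_weight total by auto
  qed
qed

lemma output_cs_partition: "coalition_structure n (output_cs n s)"
  unfolding coalition_structure_def output_cs_def
  by (rule partition_onI) (auto simp: disjnt_def)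

text \<open>At the end of the scan, the g closed bags are g distinct winning
  coalitions of the output, so its welfare is at least g.\<close>
lemma greedy_welfare_ge:
  assumes q: "q > 0" and inv: "greedy_inv n q w (fst s) (n+1) g a"
  shows "g \<le> social_welfare q w (output_cs n s)"
proof -
  define B where "B l = {i\<in>{1..n}. fst s i = l}" for l
  have winning: "q \<le> (\<Sum>j\<in>B l. w j)" if "l < g" for l
  proof -
    have "B l = {j\<in>{1..<n+1}. fst s j = l}" unfolding B_def by auto
    then show ?thesis using inv that unfolding greedy_inv_def by auto
  qed
  have nonempty: "B l \<noteq> {}" if "l < g" for l using winning[OF that] q by fastforce
  have closed_in_output: "B ` {..<g} \<subseteq> output_cs n s"
  proof
    fix C assume "C \<in> B ` {..<g}"
    then obtain l i where "l < g" "C = B l" "i \<in> B l" using nonempty by blast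
    then show "C \<in> output_cs n s" unfolding output_cs_def B_def by auto
  qed
  have "inj_on B {..<g}"
  proof
    fix l l' assume "l \<in> {..<g}" "l' \<in> {..<g}" "B l = B l'"
    then obtain i where "i \<in> B l" "i \<in> B l'" using nonempty by fastforce
    then show "l = l'" unfolding B_def by auto
  qed
  then have "(\<Sum>C\<in>B ` {..<g}. wvg_value q w C) = (\<Sum>l<g. wvg_value q w (B l))"
    by (simp add: sum.reindex)
  also have "\<dots> = g" using winning by (simp add: wvg_value_def)
  finally have "g = (\<Sum>C\<in>B ` {..<g}. wvg_value q w C)" ..
  also have "\<dots> \<le> social_welfare q w (output_cs n s)"
    unfolding social_welfare_def using closed_in_output
    by (intro sum_mono2) (auto simp: output_cs_def)
  finally show ?thesis .
qed

lemma greedy_two_approximation: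
  assumes q: "q > 0" and wp: "\<forall>j\<in>{1..n}. w j > 0"
    and inv: "greedy_inv n q w (fst s) (n+1) g a" and cs: "coalition_structure n \<pi>"
  shows "real (social_welfare q w \<pi>) \<le> 2 * real (social_welfare q w (output_cs n s))"
proof -
  have "{1..<n+1} = {1..n}" by auto
  then have "(\<Sum>j\<in>{1..n}. min (w j) q) \<le> 2*q*g + a" "a < q"
    using inv unfolding greedy_inv_def by metis+
  then have "real (social_welfare q w \<pi>) * q < (2*g+1) * q"
    using welfare_times_quota_le[OF q wp cs] by (simp add: algebra_simps)
  then have "social_welfare q w \<pi> \<le> 2*g" using q by simp
  moreover have "g \<le> social_welfare q w (output_cs n s)" using greedy_welfare_ge[OF q inv] .
  ultimately show ?thesis by linarith
qed

section \<open>The greedy scan as a real-RAM program\<close>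

text \<open>Working memory beyond the input: nat cell n+1 holds the index i of the
  next player, nat cell n+2 the label g of the open bag, and real cell n+1
  the weight a of the open bag (so idx_addr addresses both cells n+1).\<close>
definition idx_addr :: nexp where "idx_addr = NPlus (NM (NC 0)) (NC 1)"
definition label_addr :: nexp where "label_addr = NPlus (NM (NC 0)) (NC 2)"

text \<open>The loop body: add w i to the open bag, label player i with g, close
  the bag if it reached the quota, and move to the next player.\<close>
definition accumulate :: com where
  "accumulate = RAsg idx_addr (RPlus (RM idx_addr) (RM (NM idx_addr)))"
definition assign_label :: com where
  "assign_label = NAsg (NM idx_addr) (NM label_addr)"
definition close_bag :: com where
  "close_bag = If (RLess (RM idx_addr) (RM (NC 0))) Skip
     (Seq (NAsg label_addr (NPlus (NM label_addr) (NC 1))) (RAsg idx_addr (RofN (NC 0))))"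
definition advance :: com where
  "advance = NAsg idx_addr (NPlus (NM idx_addr) (NC 1))"
definition body :: com where
  "body = Seq accumulate (Seq assign_label (Seq close_bag advance))"
definition loop :: com where
  "loop = While (NLess (NM idx_addr) (NPlus (NM (NC 0)) (NC 1))) body"
definition prepare :: com where
  "prepare = Seq (NAsg idx_addr (NC 1)) (Seq (NAsg label_addr (NC 0)) (RAsg idx_addr (RofN (NC 0))))"
definition greedy :: com where
  "greedy = Seq prepare loop"

text \<open>Assignment rules with the successor state left as an equation, so that
  they apply to states written in any form.\<close>
lemma exec_NAsg: "s' = ((fst s)(neval s a := neval s e), snd s) \<Longrightarrow> exec (NAsg a e) s 1 s'"
  using exec.NAsg by simp

lemma exec_RAsg: "s' = (fst s, (snd s)(neval s a := reval s e)) \<Longrightarrow> exec (RAsg a e) s 1 s'"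
  using exec.RAsg by simp

lemma body_exec:
  fixes s :: state
  assumes n: "fst s 0 = n" and q: "snd s 0 = q"
    and cells: "fst s (n+1) = i" "fst s (n+2) = g" "snd s (n+1) = a" "snd s i = x"
    and i: "1 \<le> i" "i \<le> n"
  shows "\<exists>t. t \<le> 6 \<and> exec body s t
     ((fst s)(i := g, n+2 := (if a + x < q then g else g+1), n+1 := i+1),
      (snd s)(n+1 := (if a + x < q then a + x else 0)))"
proof -
  define s1 where "s1 = (fst s, (snd s)(n+1 := a + x))"
  define s2 where "s2 = ((fst s)(i := g), (snd s)(n+1 := a + x))"
  define s3 where "s3 = ((fst s)(i := g, n+2 := (if a + x < q then g else g+1)),
                         (snd s)(n+1 := (if a + x < q then a + x else 0)))"
  have ne: "i \<noteq> 0" "i \<noteq> n+1" "i \<noteq> n+2" using i by auto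
  have "exec accumulate s 1 s1" unfolding accumulate_def
    by (rule exec_RAsg) (use cells in \<open>simp add: s1_def idx_addr_def n\<close>)
  moreover have "exec assign_label s1 1 s2" unfolding assign_label_def
    by (rule exec_NAsg) (use cells in \<open>simp add: s1_def s2_def idx_addr_def label_addr_def n\<close>)
  moreover have "\<exists>t. t \<le> 3 \<and> exec close_bag s2 t s3"
  proof (cases "a + x < q")
    case True
    have "s3 = s2" using True cells by (auto simp: s2_def s3_def fun_eq_iff)
    moreover have "exec close_bag s2 (1+1) s2" unfolding close_bag_def
      using exec.Skip by (intro exec.IfT) (auto simp: s2_def idx_addr_def n q ne True)
    ultimately show ?thesis by (intro exI[of _ "1+1"]) simp
  next
    case False
    define s25 where "s25 = ((fst s)(i := g, n+2 := g+1), (snd s)(n+1 := a + x))"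
    have "exec (NAsg label_addr (NPlus (NM label_addr) (NC 1))) s2 1 s25"
      by (rule exec_NAsg) (use cells ne in \<open>simp add: s2_def s25_def label_addr_def n\<close>)
    moreover have "exec (RAsg idx_addr (RofN (NC 0))) s25 1 s3"
      by (rule exec_RAsg) (simp add: s25_def s3_def idx_addr_def n ne False)
    ultimately have "exec close_bag s2 ((1+1)+1) s3" unfolding close_bag_def
      by (intro exec.IfF exec.Seq) (auto simp: s2_def idx_addr_def n q ne False)
    then show ?thesis by (intro exI[of _ "(1+1)+1"]) simp
  qed
  moreover have "exec advance s3 1 ((fst s3)(n+1 := i+1), snd s3)" unfolding advance_def
    by (rule exec_NAsg) (use ne cells in \<open>simp add: s3_def idx_addr_def n\<close>)
  ultimately obtain t3 where "t3 \<le> 3"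
    "exec body s (1 + (1 + (t3 + 1))) ((fst s3)(n+1 := i+1), snd s3)"
    unfolding body_def by (meson exec.Seq)
  then show ?thesis by (intro exI[of _ "1 + (1 + (t3 + 1))"]) (simp add: s3_def)
qed

definition state_inv :: "nat \<Rightarrow> real \<Rightarrow> (nat \<Rightarrow> real) \<Rightarrow> state \<Rightarrow> bool" where
  "state_inv n q w s \<longleftrightarrow> fst s 0 = n \<and> snd s 0 = q \<and> (\<forall>j\<in>{1..n}. snd s j = w j) \<and>
     greedy_inv n q w (fst s) (fst s (n+1)) (fst s (n+2)) (snd s (n+1))"

lemma body_step:
  assumes q: "q > 0" and wp: "\<forall>j\<in>{1..n}. w j > 0" and inv: "state_inv n q w s"
    and i: "fst s (n+1) \<le> n"
  shows "\<exists>t s'. t \<le> 6 \<and> exec body s t s' \<and> state_inv n q w s' \<and> fst s' (n+1) = fst s (n+1) + 1"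
proof -
  define i g a where "i = fst s (n+1)" and "g = fst s (n+2)" and "a = snd s (n+1)"
  define g' a' where "g' = (if a + w i < q then g else g+1)" and "a' = (if a + w i < q then a + w i else 0)"
  define s' where "s' = ((fst s)(i := g, n+2 := g', n+1 := i+1), (snd s)(n+1 := a'))"
  have S: "fst s 0 = n" "snd s 0 = q" "\<forall>j\<in>{1..n}. snd s j = w j" "greedy_inv n q w (fst s) i g a"
    using inv by (auto simp: state_inv_def i_def g_def a_def)
  have i_range: "1 \<le> i" "i \<le> n" using S(4) i by (auto simp: greedy_inv_def i_def)
  then have wi: "snd s i = w i" using S(3) by auto
  obtain t where t: "t \<le> 6" "exec body s t s'"
    using body_exec[OF S(1,2) i_def[symmetric] g_def[symmetric] a_def[symmetric] wi i_range]
    by (auto simp: s'_def g'_def a'_def)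
  have "greedy_inv n q w ((fst s)(i := g)) (i+1) g' a'"
    unfolding g'_def a'_def using greedy_inv_step[OF S(4) i_range(2) wp q] .
  then have "greedy_inv n q w (fst s') (i+1) g' a'"
    by (rule greedy_inv_cong[THEN iffD1, rotated]) (use i_range in \<open>auto simp: s'_def\<close>)
  then have "state_inv n q w s'" using S i_range by (auto simp: state_inv_def s'_def)
  then show ?thesis using t by (intro exI[of _ t] exI[of _ s']) (simp add: s'_def i_def)
qed

lemma loop_run:
  assumes q: "q > 0" and wp: "\<forall>j\<in>{1..n}. w j > 0"
    and inv: "state_inv n q w s" and m: "n + 1 - fst s (n+1) = m"
  shows "\<exists>t s'. t \<le> 7*m + 1 \<and> exec loop s t s' \<and> state_inv n q w s' \<and> fst s' (n+1) = n+1"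
  using inv m
proof (induction m arbitrary: s)
  case 0
  then have scanned: "fst s (n+1) = n+1" by (simp add: state_inv_def greedy_inv_def)
  have "exec loop s 1 s" unfolding loop_def
    by (rule exec.WhileF) (use 0 scanned in \<open>simp add: idx_addr_def state_inv_def\<close>)
  then show ?case using 0 scanned by (intro exI[of _ 1] exI[of _ s]) auto
next
  case (Suc m)
  then have le: "fst s (n+1) \<le> n" by simp
  obtain t s' where body_run: "t \<le> 6" "exec body s t s'" "state_inv n q w s'"
      "fst s' (n+1) = fst s (n+1) + 1"
    using body_step[OF q wp Suc.prems(1) le] by blast
  have "n + 1 - fst s' (n+1) = m" using body_run(4) Suc.prems(2) by simp
  then obtain t2 s2 where rest: "t2 \<le> 7*m + 1" "exec loop s' t2 s2" "state_inv n q w s2" "fst s2 (n+1) = n+1"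
    using Suc.IH[OF body_run(3)] by blast
  have "exec loop s (t + t2 + 1) s2" unfolding loop_def
    by (rule exec.WhileT[OF _ body_run(2) rest(2)[unfolded loop_def]])
      (use Suc.prems le in \<open>simp add: idx_addr_def state_inv_def\<close>)
  then show ?case using body_run(1) rest by (intro exI[of _ "t + t2 + 1"] exI[of _ s2]) auto
qed

lemma greedy_run:
  assumes q: "q > 0" and wp: "\<forall>j\<in>{1..n}. w j > 0"
  shows "\<exists>t s. t \<le> 7*n + 4 \<and> exec greedy (init_state n q w) t s \<and>
           greedy_inv n q w (fst s) (n+1) (fst s (n+2)) (snd s (n+1))"
proof -
  define s0 where "s0 = init_state n q w"
  define sA where "sA = ((fst s0)(n+1 := 1), snd s0)"
  define sB where "sB = ((fst s0)(n+1 := 1, n+2 := 0), snd s0)"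
  define sC where "sC = ((fst s0)(n+1 := 1, n+2 := 0), (snd s0)(n+1 := 0))"
  have s0: "fst s0 0 = n" "snd s0 0 = q" "\<And>j. j \<in> {1..n} \<Longrightarrow> snd s0 j = w j"
    by (auto simp: s0_def init_state_def)
  have prepare_run: "exec prepare s0 (1 + (1 + 1)) sC" unfolding prepare_def
  proof (intro exec.Seq)
    show "exec (NAsg idx_addr (NC 1)) s0 1 sA"
      by (rule exec_NAsg) (simp add: sA_def idx_addr_def s0)
    show "exec (NAsg label_addr (NC 0)) sA 1 sB"
      by (rule exec_NAsg) (simp add: sA_def sB_def label_addr_def s0)
    show "exec (RAsg idx_addr (RofN (NC 0))) sB 1 sC"
      by (rule exec_RAsg) (simp add: sB_def sC_def idx_addr_def s0)
  qed
  have "state_inv n q w sC"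
    unfolding state_inv_def greedy_inv_def using s0 q by (auto simp: sC_def)
  then obtain t s where loop_run: "t \<le> 7*n + 1" "exec loop sC t s" "state_inv n q w s" "fst s (n+1) = n+1"
    using loop_run[OF q wp, of sC n] by (auto simp: sC_def)
  have "exec greedy (init_state n q w) (3 + t) s"
    using exec.Seq[OF prepare_run loop_run(2)] unfolding greedy_def s0_def by (simp add: numeral_3_eq_3)
  then show ?thesis using loop_run
    by (intro exI[of _ "3 + t"] exI[of _ s]) (simp add: state_inv_def)
qed

theorem proposition8:
  "\<exists>(P::com) (c::nat) (k::nat). \<forall>(n::nat) (q::real) (w::nat \<Rightarrow> real).
     q > 0 \<and> (\<forall>i\<in>{1..n}. w i > 0) \<longrightarrow>
     (\<exists>t s. exec P (init_state n q w) t s \<and> t \<le> c * (n + 1) ^ k \<and>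
        coalition_structure n (output_cs n s) \<and>
        (\<forall>\<pi>. coalition_structure n \<pi> \<longrightarrow>
             real (social_welfare q w \<pi>) \<le> 2 * real (social_welfare q w (output_cs n s))))"
proof (rule exI[of _ greedy], rule exI[of _ 7], rule exI[of _ 1], intro allI impI)
  fix n :: nat and q :: real and w :: "nat \<Rightarrow> real"
  assume "q > 0 \<and> (\<forall>i\<in>{1..n}. w i > 0)"
  then have q: "q > 0" and wp: "\<forall>j\<in>{1..n}. w j > 0" by auto
  obtain t s where run: "t \<le> 7*n + 4" "exec greedy (init_state n q w) t s"
    and inv: "greedy_inv n q w (fst s) (n+1) (fst s (n+2)) (snd s (n+1))"
    using greedy_run[OF q wp] by blast
  have "t \<le> 7 * (n + 1) ^ 1" using run(1) by simp
  then show "\<exists>t s. exec greedy (init_state n q w) t s \<and> t \<le> 7 * (n + 1) ^ 1 \<and>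
        coalition_structure n (output_cs n s) \<and>
        (\<forall>\<pi>. coalition_structure n \<pi> \<longrightarrow>
             real (social_welfare q w \<pi>) \<le> 2 * real (social_welfare q w (output_cs n s)))"
    using run(2) output_cs_partition greedy_two_approximation[OF q wp inv] by blast
qed

end
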